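(* Let $d\ge1$ and $a_1,\dots,a_d>0$, and define $G:(0,\infty)\to\mathbb{R}$ by $$G(k)=2k\sum_{j=1}^d\tan\left(\frac{\pi}{2}\left(\left\lceil\frac{ka_j}{\pi}\right\rceil-\frac{ka_j}{\pi}\right)\right).$$ Then: (i) a point $k>0$ is a discontinuity of $G$ if and only if $k=m\pi/a_j$ for some $j\in\{1,\dots,d\}$ and some $m\in\mathbb{N}$; (ii) $G$ is strictly decreasing on each interval of continuity; (iii) for every $m\in\mathbb{N}$ and $j\in\{1,\dots,d\}$, $\lim_{k\searrow m\pi/a_j}G(k)=+\infty$.
   Context: $\lceil\cdot\rceil$ denotes the ceiling function and $\mathbb{N}=\{1,2,3,\dots\}$. *)

theory Defs
  imports "HOL-Analysis.Analysis"
begin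

definition G :: "nat \<Rightarrow> (nat \<Rightarrow> real) \<Rightarrow> real \<Rightarrow> real" where
  "G d a k = 2 * k * (\<Sum>j=1..d. tan (pi / 2 * (real_of_int \<lceil>k * a j / pi\<rceil> - k * a j / pi)))"

end

theory Submission
  imports Defs
begin

(* With x = k a_j / pi, the j-th summand of G is (2 pi / a_j) x tan (pi/2 (ceil x - x)). On each cell
   n - 1 < x < n this is x tan (pi/2 (n - x)), whose derivative has the sign of sin (pi (n - x)) - pi x
   and is therefore negative; it vanishes at x = n and tends to +infinity as x decreases to n, since the
   tangent's argument tends to pi/2 from below. All summands are nonnegative, so one blowing summand
   forces G to blow up, and G is continuous exactly off the lattice points m pi / a_j. *)

lemma sin_less_self:
  fixes x :: real
  assumes "0 < x"
  shows "sin x < x"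
proof (cases "x < 2")
  case True
  have "sin (x/2) \<le> x/2" using assms by (intro sin_x_le_x) auto
  moreover have "0 < cos (x/2)" using True assms pi_gt3 by (intro cos_gt_zero) auto
  moreover have "cos (x/2) < 1" using True assms pi_gt3 cos_monotone_0_pi[of 0 "x/2"] by simp
  ultimately have "2 * sin (x/2) * cos (x/2) \<le> 2 * (x/2) * cos (x/2)" "2 * (x/2) * cos (x/2) < x"
    using assms by (auto intro: mult_right_mono)
  moreover have "sin x = 2 * sin (x/2) * cos (x/2)"
    using sin_double[of "x/2"] by simp
  ultimately show ?thesis by linarith
next
  case False
  then show ?thesis using sin_le_one[of x] by linarith
qed

definition gap_tan :: "real \<Rightarrow> real" where
  "gap_tan x = tan (pi / 2 * (of_int \<lceil>x\<rceil> - x))"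

lemma G_eq_sum_gap_tan: "G d a k = 2 * k * (\<Sum>j=1..d. gap_tan (k * a j / pi))"
  by (simp add: G_def gap_tan_def)

lemma gap_tan_cell:
  assumes "of_int n - 1 < x" "x \<le> of_int n"
  shows "gap_tan x = tan (pi / 2 * (of_int n - x))"
  using assms by (simp add: gap_tan_def ceiling_unique)

lemma gap_tan_nonneg: "0 \<le> gap_tan x"
proof -
  have "0 \<le> pi / 2 * (of_int \<lceil>x\<rceil> - x)" "pi / 2 * (of_int \<lceil>x\<rceil> - x) < pi / 2"
    using le_of_int_ceiling[of x] ceiling_correct[of x] by auto
  then show ?thesis
    unfolding gap_tan_def by (metis tan_zero less_eq_real_def tan_gt_zero)
qed

lemma isCont_gap_tan:
  assumes "x \<notin> \<int>"
  shows "isCont gap_tan x"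
proof -
  have "x \<noteq> of_int \<lceil>x\<rceil>"
    using assms by (metis Ints_of_int)
  then have "0 < of_int \<lceil>x\<rceil> - x" "of_int \<lceil>x\<rceil> - x < 1"
    using le_of_int_ceiling[of x] ceiling_correct[of x] by linarith+
  then have "cos (pi / 2 * (of_int \<lceil>x\<rceil> - x)) \<noteq> 0"
    by (intro order.strict_implies_not_eq[symmetric] cos_gt_zero) auto
  moreover have "isCont (\<lambda>t. real_of_int \<lceil>t\<rceil>) x"
    unfolding isCont_def using assms by (intro tendsto_of_int_ceiling tendsto_ident_at)
  ultimately show ?thesis
    unfolding gap_tan_def[abs_def] by (intro isCont_tan' continuous_intros) auto
qed

lemma filterlim_gap_tan_at_right: "filterlim gap_tan at_top (at_right (real_of_int n))"
proof -
  define \<theta> where "\<theta> x = pi / 2 * (real_of_int n + 1 - x)" for x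
  have cell: "eventually (\<lambda>x. real_of_int n < x \<and> x < real_of_int n + 1) (at_right (real_of_int n))"
    unfolding eventually_at_right_field by (intro exI[of _ "real_of_int n + 1"]) auto
  have "(\<theta> \<longlongrightarrow> pi / 2) (at_right (real_of_int n))"
    unfolding \<theta>_def by (auto intro!: tendsto_eq_intros)
  moreover have "eventually (\<lambda>x. \<theta> x \<in> {..<pi/2} \<and> \<theta> x \<noteq> pi/2) (at_right (real_of_int n))"
    using cell by eventually_elim (auto simp: \<theta>_def)
  ultimately have "filterlim \<theta> (at_left (pi / 2)) (at_right (real_of_int n))"
    unfolding filterlim_at by auto
  then have "filterlim (\<lambda>x. tan (\<theta> x)) at_top (at_right (real_of_int n))"
    by (rule filterlim_compose[OF filterlim_tan_at_left])
  moreover have "eventually (\<lambda>x. tan (\<theta> x) = gap_tan x) (at_right (real_of_int n))"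
    using cell by eventually_elim (simp add: \<theta>_def gap_tan_cell[of "n + 1"])
  ultimately show ?thesis by (simp add: filterlim_cong)
qed

lemma mult_gap_tan_strict_decreasing:
  assumes x: "0 < x" and xy: "x < y" and y: "y < of_int \<lceil>x\<rceil>"
  shows "y * gap_tan y < x * gap_tan x"
proof -
  define n where "n = \<lceil>x\<rceil>"
  have lo: "of_int n - 1 < x" unfolding n_def using ceiling_correct by linarith
  have n1: "1 \<le> n" unfolding n_def using x by simp
  have "y * tan (pi / 2 * (of_int n - y)) < x * tan (pi / 2 * (of_int n - x))"
  proof (rule DERIV_neg_imp_decreasing[OF xy])
    fix t assume "x \<le> t" "t \<le> y"
    then have t: "0 < t" "of_int n - 1 < t" "t < of_int n"
      using x lo y n_def by linarith+
    define \<theta> where "\<theta> = pi / 2 * (of_int n - t)"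
    have \<theta>: "0 < \<theta>" "\<theta> < pi / 2" unfolding \<theta>_def using t by auto
    then have cos: "0 < cos \<theta>" by (intro cos_gt_zero) auto
    have "((\<lambda>t. t * tan (pi / 2 * (of_int n - t))) has_real_derivative
        tan \<theta> - pi * t / (2 * (cos \<theta>)\<^sup>2)) (at t)"
      using cos unfolding \<theta>_def
      by (auto intro!: derivative_eq_intros DERIV_tan[THEN DERIV_chain2] simp: field_simps)
    moreover have "sin (2 * \<theta>) < pi * t"
    proof (cases "n = 1")
      case True
      then have "sin (2 * \<theta>) = sin (pi * t)"
        unfolding \<theta>_def by (simp add: right_diff_distrib)
      then show ?thesis using t(1) by (simp add: sin_less_self)
    next
      case False
      then have "1 < t" using n1 t(2) by linarith
      then have "pi < pi * t" by simp
      then show ?thesis using sin_le_one[of "2 * \<theta>"] pi_gt3 by linarith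
    qed
    then have "tan \<theta> - pi * t / (2 * (cos \<theta>)\<^sup>2) < 0"
      using cos sin_double[of \<theta>] by (simp add: tan_def power2_eq_square field_simps)
    ultimately show "\<exists>D. ((\<lambda>t. t * tan (pi / 2 * (of_int n - t))) has_real_derivative D) (at t) \<and> D < 0"
      by blast
  qed
  moreover have "gap_tan t = tan (pi / 2 * (of_int n - t))" if "x \<le> t" "t \<le> y" for t
    using that lo y n_def by (intro gap_tan_cell) auto
  ultimately show ?thesis using xy by simp
qed

lemma scaled_mult_gap_tan_strict_decreasing:
  assumes c: "0 < c" and "0 < x" "x < y" and "y * c / pi < of_int \<lceil>x * c / pi\<rceil>"
  shows "2 * y * gap_tan (y * c / pi) < 2 * x * gap_tan (x * c / pi)"
proof -
  have "y * c / pi * gap_tan (y * c / pi) < x * c / pi * gap_tan (x * c / pi)"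
    using assms by (intro mult_gap_tan_strict_decreasing) (auto simp: divide_strict_right_mono)
  then have "2 * pi / c * (y * c / pi * gap_tan (y * c / pi)) < 2 * pi / c * (x * c / pi * gap_tan (x * c / pi))"
    using c by (intro mult_strict_left_mono) auto
  then show ?thesis using c by simp
qed

lemma gap_tan_summand_le_G:
  assumes "0 \<le> k" "j \<in> {1..d}"
  shows "2 * k * gap_tan (k * a j / pi) \<le> G d a k"
  unfolding G_eq_sum_gap_tan using assms
  by (intro mult_left_mono member_le_sum gap_tan_nonneg) auto

lemma filterlim_G_at_right:
  assumes "0 < a j" "j \<in> {1..d}" "1 \<le> m"
  shows "filterlim (G d a) at_top (at_right (real m * pi / a j))"
proof -
  define k0 where "k0 = real m * pi / a j"
  have k0: "0 < k0" using assms unfolding k0_def by simp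
  have "((\<lambda>k. k * a j / pi) \<longlongrightarrow> real m) (at_right k0)"
    using assms unfolding k0_def by (auto intro!: tendsto_eq_intros)
  moreover have "eventually (\<lambda>k. real m < k * a j / pi) (at_right k0)"
    using eventually_at_right_less[of k0]
    by eventually_elim (use assms in \<open>auto simp: k0_def field_simps\<close>)
  ultimately have "filterlim (\<lambda>k. k * a j / pi) (at_right (real m)) (at_right k0)"
    by (auto simp: filterlim_at elim: eventually_mono)
  then have "filterlim (\<lambda>k. gap_tan (k * a j / pi)) at_top (at_right k0)"
    using filterlim_gap_tan_at_right[of "int m"] by (auto intro: filterlim_compose)
  then have "filterlim (\<lambda>k. 2 * k * gap_tan (k * a j / pi)) at_top (at_right k0)"
    using k0 by (intro filterlim_tendsto_pos_mult_at_top[where c = "2 * k0"])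
      (auto intro!: tendsto_eq_intros)
  moreover have "eventually (\<lambda>k. 2 * k * gap_tan (k * a j / pi) \<le> G d a k) (at_right k0)"
    using eventually_at_right_less[of k0] by eventually_elim (use k0 assms in \<open>auto intro: gap_tan_summand_le_G\<close>)
  ultimately show ?thesis unfolding k0_def by (rule filterlim_at_top_mono)
qed

lemma not_isCont_G:
  assumes "0 < a j" "j \<in> {1..d}" "1 \<le> m"
  shows "\<not> isCont (G d a) (real m * pi / a j)"
proof
  let ?F = "at_right (real m * pi / a j)"
  assume "isCont (G d a) (real m * pi / a j)"
  then have "(G d a \<longlongrightarrow> G d a (real m * pi / a j)) ?F"
    unfolding isCont_def by (rule tendsto_mono[OF at_le, rotated]) simp
  moreover have "filterlim (G d a) at_infinity ?F"
    using filterlim_G_at_right[of a j d m, OF assms] by (rule filterlim_at_top_imp_at_infinity)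
  ultimately show False
    by (intro not_tendsto_and_filterlim_at_infinity[of ?F "G d a"]) auto
qed

lemma isCont_G:
  assumes "\<And>j. j \<in> {1..d} \<Longrightarrow> k * a j / pi \<notin> \<int>"
  shows "isCont (G d a) k"
proof -
  have "isCont (\<lambda>k. 2 * k * (\<Sum>j=1..d. gap_tan (k * a j / pi))) k"
    using assms by (intro continuous_intros isCont_o2[where g = gap_tan, OF _ isCont_gap_tan]) auto
  then show ?thesis by (simp add: G_eq_sum_gap_tan[abs_def])
qed

lemma Ints_mult_divide_pi_iff:
  assumes "0 < k" "0 < c"
  shows "k * c / pi \<in> \<int> \<longleftrightarrow> (\<exists>m::nat. 1 \<le> m \<and> k = real m * pi / c)"
proof
  assume "k * c / pi \<in> \<int>"
  then obtain z where z: "k * c / pi = of_int z" by (auto elim: Ints_cases)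
  moreover have "0 < k * c / pi" using assms by simp
  ultimately have "1 \<le> z" by simp
  moreover have "k = real (nat z) * pi / c" using z assms \<open>1 \<le> z\<close> by (simp add: field_simps)
  ultimately show "\<exists>m::nat. 1 \<le> m \<and> k = real m * pi / c" by (intro exI[of _ "nat z"]) auto
next
  assume "\<exists>m::nat. 1 \<le> m \<and> k = real m * pi / c"
  then show "k * c / pi \<in> \<int>" using assms by auto
qed

lemma not_isCont_G_iff:
  assumes "\<And>j. j \<in> {1..d} \<Longrightarrow> 0 < a j" "0 < k"
  shows "\<not> isCont (G d a) k \<longleftrightarrow> (\<exists>j\<in>{1..d}. \<exists>m::nat. 1 \<le> m \<and> k = real m * pi / a j)"
proof
  assume "\<not> isCont (G d a) k"
  then obtain j where j: "j \<in> {1..d}" "k * a j / pi \<in> \<int>" using isCont_G by blast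
  then have "\<exists>m::nat. 1 \<le> m \<and> k = real m * pi / a j"
    using assms Ints_mult_divide_pi_iff[of k "a j"] by simp
  with j(1) show "\<exists>j\<in>{1..d}. \<exists>m::nat. 1 \<le> m \<and> k = real m * pi / a j" by blast
next
  assume "\<exists>j\<in>{1..d}. \<exists>m::nat. 1 \<le> m \<and> k = real m * pi / a j"
  then obtain j m where "j \<in> {1..d}" "1 \<le> m" "k = real m * pi / a j" by blast
  then show "\<not> isCont (G d a) k" using assms(1) not_isCont_G by simp
qed

lemma G_strict_decreasing:
  assumes "1 \<le> d" and a: "\<And>j. j \<in> {1..d} \<Longrightarrow> 0 < a j"
    and I: "is_interval I" "I \<subseteq> {0<..}" "\<forall>k\<in>I. isCont (G d a) k"
    and "x \<in> I" "y \<in> I" "x < y"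
  shows "G d a y < G d a x"
proof -
  have x: "0 < x" using I \<open>x \<in> I\<close> by auto
  have "2 * y * gap_tan (y * a j / pi) < 2 * x * gap_tan (x * a j / pi)" if j: "j \<in> {1..d}" for j
  proof (rule scaled_mult_gap_tan_strict_decreasing[OF a[OF j] x \<open>x < y\<close>])
    define n where "n = \<lceil>x * a j / pi\<rceil>"
    define k where "k = real_of_int n * pi / a j"
    have "0 < x * a j / pi" using x a[OF j] by simp
    then have n: "1 \<le> n" unfolding n_def by simp
    have "x * a j / pi \<le> of_int n" unfolding n_def by (rule le_of_int_ceiling)
    then have "x \<le> k" using a[OF j] by (simp add: k_def field_simps)
    moreover have "\<not> isCont (G d a) k"
      using not_isCont_G[of a j d "nat n", OF a[OF j] j] n by (simp add: k_def)
    ultimately have "\<not> k \<le> y"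
      using I \<open>x \<in> I\<close> \<open>y \<in> I\<close> unfolding is_interval_1 by blast
    then show "y * a j / pi < of_int \<lceil>x * a j / pi\<rceil>"
      using a[OF j] by (simp add: k_def n_def field_simps)
  qed
  then have "(\<Sum>j=1..d. 2 * y * gap_tan (y * a j / pi)) < (\<Sum>j=1..d. 2 * x * gap_tan (x * a j / pi))"
    using \<open>1 \<le> d\<close> by (intro sum_strict_mono) auto
  then show ?thesis by (simp add: G_eq_sum_gap_tan sum_distrib_left)
qed

theorem lemma3p2:
  fixes d :: nat and a :: "nat \<Rightarrow> real"
  assumes "d \<ge> 1"
    and "\<And>j. j \<in> {1..d} \<Longrightarrow> a j > 0"
  shows "(\<forall>k>0. \<not> isCont (G d a) k \<longleftrightarrow>
            (\<exists>j\<in>{1..d}. \<exists>m::nat. m \<ge> 1 \<and> k = real m * pi / a j))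
      \<and> (\<forall>I::real set. is_interval I \<longrightarrow> I \<subseteq> {0<..} \<longrightarrow> (\<forall>k\<in>I. isCont (G d a) k) \<longrightarrow>
            (\<forall>x\<in>I. \<forall>y\<in>I. x < y \<longrightarrow> G d a y < G d a x))
      \<and> (\<forall>j\<in>{1..d}. \<forall>m::nat. m \<ge> 1 \<longrightarrow>
            filterlim (G d a) at_top (at_right (real m * pi / a j)))"
proof (intro conjI)
  show "\<forall>k>0. \<not> isCont (G d a) k \<longleftrightarrow> (\<exists>j\<in>{1..d}. \<exists>m::nat. m \<ge> 1 \<and> k = real m * pi / a j)"
    using not_isCont_G_iff[of d a, OF assms(2)] by blast
  show "\<forall>I::real set. is_interval I \<longrightarrow> I \<subseteq> {0<..} \<longrightarrow> (\<forall>k\<in>I. isCont (G d a) k) \<longrightarrow>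
      (\<forall>x\<in>I. \<forall>y\<in>I. x < y \<longrightarrow> G d a y < G d a x)"
    using G_strict_decreasing[of d a, OF assms] by blast
  show "\<forall>j\<in>{1..d}. \<forall>m::nat. m \<ge> 1 \<longrightarrow> filterlim (G d a) at_top (at_right (real m * pi / a j))"
    using filterlim_G_at_right[of a _ d] assms(2) by blast
qed

end
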